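(* Let $P$ be a finite poset and let $x \in P$ be a $\chi$-point of $P$, i.e. $\chi(P_{>x}) = 1$ where $P_{>x} = \{y \in P \mid y > x\}$. If $h, h' : P \to \mathbb{Z}$ are two functions with $h(y) = h'(y)$ for every $y \in P$ with $y \neq x$, then \[ \int_{P} h \, d\chi = \int_{P} h' \, d\chi . \]
   Context: For a finite poset $P$, the zeta function is the $P \times P$ matrix with $\zeta(x,y)=1$ if $x \le y$ and $0$ otherwise; it is invertible, and the Euler characteristic of $P$ is $\chi(P) = \sum_{x,y \in P} \zeta^{-1}(x,y)$ (this equals the Euler characteristic of the order complex of $P$; $\chi(\emptyset)=0$). A filter of $P$ is a subset $Q$ closed upward ($x \in Q$, $x \le y$ implies $y \in Q$). For a subset $Q$, $\delta_Q : P \to \mathbb{Z}$ is its indicator function. Every function $f : P \to \mathbb{Z}$ can be written as $f = \sum_i a_i \delta_{Q_i}$ with $a_i \in \mathbb{Z}$ and $Q_i$ filters of $P$; the Euler calculus (Euler integral) of $f$ is $\int_P f\, d\chi = \sum_i a_i \chi(Q_i)$, which is independent of the chosen representation. A point $x$ of $P$ is a $\chi$-point if $\chi(P_{>x}) = 1$. *)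

theory Defs
  imports Main
begin

text \<open>A finite poset is modelled as a finite carrier set P of a type with a partial order;
 subsets carry the induced order.\<close>

definition zeta :: "'a::order \<Rightarrow> 'a \<Rightarrow> int" where
  "zeta x y = (if x \<le> y then 1 else 0)"

definition zeta_inv :: "'a::order set \<Rightarrow> 'a \<Rightarrow> 'a \<Rightarrow> int" where
  "zeta_inv Q = (THE m.
      (\<forall>x\<in>Q. \<forall>y\<in>Q. (\<Sum>z\<in>Q. zeta x z * m z y) = (if x = y then 1 else 0)) \<and>
      (\<forall>x\<in>Q. \<forall>y\<in>Q. (\<Sum>z\<in>Q. m x z * zeta z y) = (if x = y then 1 else 0)) \<and>
      (\<forall>x y. (x \<notin> Q \<or> y \<notin> Q) \<longrightarrow> m x y = 0))"

definition euler_char :: "'a::order set \<Rightarrow> int" where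
  "euler_char Q = (\<Sum>x\<in>Q. \<Sum>y\<in>Q. zeta_inv Q x y)"

definition is_filter :: "'a::order set \<Rightarrow> 'a set \<Rightarrow> bool" where
  "is_filter P Q \<longleftrightarrow> Q \<subseteq> P \<and> (\<forall>x\<in>Q. \<forall>y\<in>P. x \<le> y \<longrightarrow> y \<in> Q)"

definition delta :: "'a set \<Rightarrow> 'a \<Rightarrow> int" where
  "delta Q y = (if y \<in> Q then 1 else 0)"

definition euler_integral :: "'a::order set \<Rightarrow> ('a \<Rightarrow> int) \<Rightarrow> int" where
  "euler_integral P f = (THE c. \<exists>rep :: (int \<times> 'a set) list.
      (\<forall>(a, Q)\<in>set rep. is_filter P Q) \<and>
      (\<forall>y\<in>P. f y = (\<Sum>(a, Q)\<leftarrow>rep. a * delta Q y)) \<and>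
      c = (\<Sum>(a, Q)\<leftarrow>rep. a * euler_char Q))"

end

theory Submission
  imports Defs
begin

text \<open>Put \<open>A = {y \<in> P. x \<le> y}\<close> and \<open>B = {y \<in> P. x < y}\<close>. On \<open>P\<close> the difference
  \<open>h' - h\<close> is \<open>d (\<delta>\<^sub>A - \<delta>\<^sub>B)\<close> with \<open>d = h' x - h x\<close>. Both sets are filters, \<open>\<chi>(A) = 1\<close>
  because \<open>A\<close> has the least element \<open>x\<close>, and \<open>\<chi>(B) = 1\<close> is the hypothesis. Appending
  \<open>(d, A)\<close> and \<open>(-d, B)\<close> to a representation of \<open>h\<close> thus yields a representation of \<open>h'\<close>
  with the same value, and conversely. Hence \<open>h\<close> and \<open>h'\<close> admit exactly the same values
  of the integral, whether or not these values are unique.\<close>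

text \<open>The pivot hypothesis says that \<open>M\<close> is unitriangular for some linear ordering of \<open>Q\<close>.\<close>

lemma pivoted_system_solvable:
  fixes M :: "'a \<Rightarrow> 'a \<Rightarrow> int"
  assumes "finite Q"
    and diag: "\<forall>x\<in>Q. M x x = 1"
    and pivot: "\<forall>A\<subseteq>Q. A \<noteq> {} \<longrightarrow> (\<exists>a\<in>A. \<forall>x\<in>A. x \<noteq> a \<longrightarrow> M x a = 0)"
  shows "\<exists>g. \<forall>x\<in>Q. (\<Sum>z\<in>Q. M x z * g z) = b x"
proof -
  have "\<exists>g. \<forall>x\<in>S. (\<Sum>z\<in>S. M x z * g z) = b x" if "S \<subseteq> Q" for S
    using finite_subset[OF that assms(1)] that
  proof (induction S rule: finite_remove_induct)
    case empty
    then show ?case by simp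
  next
    case (remove A)
    obtain a where a: "a \<in> A" and a_pivot: "\<forall>x\<in>A. x \<noteq> a \<longrightarrow> M x a = 0"
      using pivot remove.prems remove.hyps(2) by blast
    have "A - {a} \<subseteq> Q"
      using remove.prems by blast
    then obtain g where g: "\<forall>x\<in>A - {a}. (\<Sum>z\<in>A - {a}. M x z * g z) = b x"
      using remove.IH[OF a] by blast
    define g' where "g' = g(a := b a - (\<Sum>z\<in>A - {a}. M a z * g z))"
    have split: "(\<Sum>z\<in>A. M x z * g' z) = M x a * g' a + (\<Sum>z\<in>A - {a}. M x z * g z)" for x
    proof -
      have "(\<Sum>z\<in>A. M x z * g' z) = M x a * g' a + (\<Sum>z\<in>A - {a}. M x z * g' z)"
        using remove.hyps(1) a by (simp add: sum.remove)
      also have "(\<Sum>z\<in>A - {a}. M x z * g' z) = (\<Sum>z\<in>A - {a}. M x z * g z)"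
        by (rule sum.cong) (auto simp: g'_def)
      finally show ?thesis .
    qed
    have "(\<Sum>z\<in>A. M x z * g' z) = b x" if x: "x \<in> A" for x
    proof (cases "x = a")
      case True
      have "M a a = 1"
        using diag a remove.prems by blast
      with True show ?thesis
        unfolding split by (simp add: g'_def)
    next
      case False
      then show ?thesis
        using a_pivot g x unfolding split by simp
    qed
    then show ?case by blast
  qed
  then show ?thesis
    by blast
qed

lemma left_inverse_eq_right_inverse:
  fixes M m1 m2 :: "'a \<Rightarrow> 'a \<Rightarrow> 'b::semiring_1"
  assumes "finite Q"
    and right: "\<forall>x\<in>Q. \<forall>y\<in>Q. (\<Sum>z\<in>Q. M x z * m1 z y) = (if x = y then 1 else 0)"
    and left: "\<forall>x\<in>Q. \<forall>y\<in>Q. (\<Sum>z\<in>Q. m2 x z * M z y) = (if x = y then 1 else 0)"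
    and "x \<in> Q" "y \<in> Q"
  shows "m1 x y = m2 x y"
proof -
  have "m2 x y = (\<Sum>w\<in>Q. m2 x w * (if w = y then 1 else 0))"
    using assms(1,5) by (simp add: if_distrib cong: if_cong)
  also have "\<dots> = (\<Sum>w\<in>Q. m2 x w * (\<Sum>z\<in>Q. M w z * m1 z y))"
    using right \<open>y \<in> Q\<close> by (intro sum.cong) auto
  also have "\<dots> = (\<Sum>w\<in>Q. \<Sum>z\<in>Q. m2 x w * M w z * m1 z y)"
    by (simp add: sum_distrib_left mult.assoc)
  also have "\<dots> = (\<Sum>z\<in>Q. (\<Sum>w\<in>Q. m2 x w * M w z) * m1 z y)"
    by (subst sum.swap) (simp add: sum_distrib_right)
  also have "\<dots> = (\<Sum>z\<in>Q. (if x = z then 1 else 0) * m1 z y)"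
    using left \<open>x \<in> Q\<close> by (intro sum.cong) auto
  also have "\<dots> = (\<Sum>z\<in>Q. if x = z then m1 z y else 0)"
    by (intro sum.cong) auto
  also have "\<dots> = m1 x y"
    using assms(1,4) by simp
  finally show ?thesis by simp
qed

lemma zeta_pivot_minimal:
  fixes Q :: "'a::order set"
  assumes "finite Q"
  shows "\<forall>A\<subseteq>Q. A \<noteq> {} \<longrightarrow> (\<exists>a\<in>A. \<forall>x\<in>A. x \<noteq> a \<longrightarrow> zeta x a = 0)"
proof (intro allI impI)
  fix A assume "A \<subseteq> Q" "A \<noteq> {}"
  then obtain a where "a \<in> A" and "\<forall>x\<in>A. x \<le> a \<longrightarrow> a = x"
    using finite_has_minimal[OF finite_subset[OF _ assms]] by blast
  then show "\<exists>a\<in>A. \<forall>x\<in>A. x \<noteq> a \<longrightarrow> zeta x a = 0"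
    by (auto simp: zeta_def)
qed

lemma zeta_pivot_maximal:
  fixes Q :: "'a::order set"
  assumes "finite Q"
  shows "\<forall>A\<subseteq>Q. A \<noteq> {} \<longrightarrow> (\<exists>a\<in>A. \<forall>x\<in>A. x \<noteq> a \<longrightarrow> zeta a x = 0)"
proof (intro allI impI)
  fix A assume "A \<subseteq> Q" "A \<noteq> {}"
  then obtain a where "a \<in> A" and "\<forall>x\<in>A. a \<le> x \<longrightarrow> a = x"
    using finite_has_maximal[OF finite_subset[OF _ assms]] by blast
  then show "\<exists>a\<in>A. \<forall>x\<in>A. x \<noteq> a \<longrightarrow> zeta a x = 0"
    by (auto simp: zeta_def)
qed

lemma zeta_diag: "zeta x x = 1"
  by (simp add: zeta_def)

lemma ex_zeta_right_inverse:
  fixes Q :: "'a::order set"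
  assumes "finite Q"
  shows "\<exists>m. \<forall>x\<in>Q. \<forall>y\<in>Q. (\<Sum>z\<in>Q. zeta x z * m z y) = (if x = y then 1 else 0)"
proof -
  have "\<forall>y. \<exists>g. \<forall>x\<in>Q. (\<Sum>z\<in>Q. zeta x z * g z) = (if x = y then 1 else 0)"
    using zeta_diag
    by (intro allI pivoted_system_solvable[OF assms _ zeta_pivot_minimal[OF assms]]) blast
  from choice[OF this] obtain G
    where "\<forall>y. \<forall>x\<in>Q. (\<Sum>z\<in>Q. zeta x z * G y z) = (if x = y then 1 else 0)"
    by blast
  then show ?thesis
    by (intro exI[of _ "\<lambda>z y. G y z"]) simp
qed

lemma ex_zeta_left_inverse:
  fixes Q :: "'a::order set"
  assumes "finite Q"
  shows "\<exists>m. \<forall>x\<in>Q. \<forall>y\<in>Q. (\<Sum>z\<in>Q. m x z * zeta z y) = (if x = y then 1 else 0)"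
proof -
  have "\<forall>x. \<exists>g. \<forall>y\<in>Q. (\<Sum>z\<in>Q. zeta z y * g z) = (if x = y then 1 else 0)"
    using zeta_diag
    by (intro allI pivoted_system_solvable[of Q "\<lambda>y z. zeta z y", OF assms _
        zeta_pivot_maximal[OF assms]]) blast
  from choice[OF this] obtain H
    where "\<forall>x. \<forall>y\<in>Q. (\<Sum>z\<in>Q. zeta z y * H x z) = (if x = y then 1 else 0)"
    by blast
  moreover have "(\<Sum>z\<in>Q. H x z * zeta z y) = (\<Sum>z\<in>Q. zeta z y * H x z)" for x y
    by (intro sum.cong refl mult.commute)
  ultimately show ?thesis
    by (intro exI[of _ H]) simp
qed

definition is_zeta_inverse :: "'a::order set \<Rightarrow> ('a \<Rightarrow> 'a \<Rightarrow> int) \<Rightarrow> bool" where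
  "is_zeta_inverse Q m \<longleftrightarrow>
      (\<forall>x\<in>Q. \<forall>y\<in>Q. (\<Sum>z\<in>Q. zeta x z * m z y) = (if x = y then 1 else 0)) \<and>
      (\<forall>x\<in>Q. \<forall>y\<in>Q. (\<Sum>z\<in>Q. m x z * zeta z y) = (if x = y then 1 else 0)) \<and>
      (\<forall>x y. (x \<notin> Q \<or> y \<notin> Q) \<longrightarrow> m x y = 0)"

lemma ex1_zeta_inverse:
  fixes Q :: "'a::order set"
  assumes "finite Q"
  shows "\<exists>!m. is_zeta_inverse Q m"
proof -
  obtain R where R: "\<forall>x\<in>Q. \<forall>y\<in>Q. (\<Sum>z\<in>Q. zeta x z * R z y) = (if x = y then 1 else 0)"
    using ex_zeta_right_inverse[OF assms] by blast
  obtain L where L: "\<forall>x\<in>Q. \<forall>y\<in>Q. (\<Sum>z\<in>Q. L x z * zeta z y) = (if x = y then 1 else 0)"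
    using ex_zeta_left_inverse[OF assms] by blast
  define m where "m = (\<lambda>x y. if x \<in> Q \<and> y \<in> Q then L x y else 0)"
  have m_eq: "m x y = R x y" if "x \<in> Q" "y \<in> Q" for x y
    using left_inverse_eq_right_inverse[OF assms R L that] that by (simp add: m_def)
  have "is_zeta_inverse Q m"
  proof -
    have "(\<Sum>z\<in>Q. zeta x z * m z y) = (\<Sum>z\<in>Q. zeta x z * R z y)"
      "(\<Sum>z\<in>Q. m x z * zeta z y) = (\<Sum>z\<in>Q. L x z * zeta z y)"
      if "x \<in> Q" "y \<in> Q" for x y
      using that m_eq by (auto intro!: sum.cong simp: m_def)
    with R L show ?thesis
      unfolding is_zeta_inverse_def by (simp add: m_def)
  qed
  moreover have "m' = m" if "is_zeta_inverse Q m'" for m'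
  proof (intro ext)
    fix x y
    show "m' x y = m x y"
    proof (cases "x \<in> Q \<and> y \<in> Q")
      case True
      then show ?thesis
        using left_inverse_eq_right_inverse[OF assms _ L] that
        unfolding is_zeta_inverse_def m_def by auto
    next
      case False
      then show ?thesis
        using that unfolding is_zeta_inverse_def m_def by auto
    qed
  qed
  ultimately show ?thesis
    by blast
qed

lemma zeta_mult_zeta_inv:
  fixes Q :: "'a::order set"
  assumes "finite Q" and "x \<in> Q" and "y \<in> Q"
  shows "(\<Sum>z\<in>Q. zeta x z * zeta_inv Q z y) = (if x = y then 1 else 0)"
proof -
  have "zeta_inv Q = (THE m. is_zeta_inverse Q m)"
    unfolding zeta_inv_def is_zeta_inverse_def by simp
  then have "is_zeta_inverse Q (zeta_inv Q)"
    using theI'[OF ex1_zeta_inverse[OF assms(1)]] by simp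
  then show ?thesis
    using assms(2,3) unfolding is_zeta_inverse_def by blast
qed

lemma euler_char_has_least:
  fixes Q :: "'a::order set"
  assumes "finite Q" and "x \<in> Q" and least: "\<forall>z\<in>Q. x \<le> z"
  shows "euler_char Q = 1"
proof -
  have column_sum: "(\<Sum>z\<in>Q. zeta_inv Q z y) = (if x = y then 1 else 0)" if "y \<in> Q" for y
  proof -
    have "(\<Sum>z\<in>Q. zeta_inv Q z y) = (\<Sum>z\<in>Q. zeta x z * zeta_inv Q z y)"
      using least by (intro sum.cong) (auto simp: zeta_def)
    then show ?thesis
      using zeta_mult_zeta_inv[OF assms(1,2) that] by simp
  qed
  have "euler_char Q = (\<Sum>y\<in>Q. \<Sum>z\<in>Q. zeta_inv Q z y)"
    unfolding euler_char_def by (rule sum.swap)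
  also have "\<dots> = (\<Sum>y\<in>Q. if x = y then 1 else 0)"
    using column_sum by simp
  also have "\<dots> = 1"
    using assms(1,2) by simp
  finally show ?thesis .
qed

lemma is_filter_atLeast: "is_filter P {y \<in> P. x \<le> y}"
  unfolding is_filter_def by (auto intro: order_trans)

lemma is_filter_greaterThan: "is_filter P {y \<in> P. x < y}"
  unfolding is_filter_def by (auto intro: less_le_trans)

definition has_euler_integral :: "'a::order set \<Rightarrow> ('a \<Rightarrow> int) \<Rightarrow> int \<Rightarrow> bool" where
  "has_euler_integral P f c \<longleftrightarrow> (\<exists>rep :: (int \<times> 'a set) list.
      (\<forall>(a, Q)\<in>set rep. is_filter P Q) \<and>
      (\<forall>y\<in>P. f y = (\<Sum>(a, Q)\<leftarrow>rep. a * delta Q y)) \<and>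
      c = (\<Sum>(a, Q)\<leftarrow>rep. a * euler_char Q))"

lemma euler_integral_eq_The: "euler_integral P f = (THE c. has_euler_integral P f c)"
  unfolding euler_integral_def has_euler_integral_def ..

lemma has_euler_integral_cong:
  assumes "\<forall>y\<in>P. f y = g y"
  shows "has_euler_integral P f c = has_euler_integral P g c"
  using assms unfolding has_euler_integral_def by simp

lemma has_euler_integral_add_filter:
  assumes "has_euler_integral P f c" and "is_filter P Q"
  shows "has_euler_integral P (\<lambda>y. f y + a * delta Q y) (c + a * euler_char Q)"
proof -
  obtain rep where filters: "\<forall>(b, R)\<in>set rep. is_filter P R"
    and represents: "\<forall>y\<in>P. f y = (\<Sum>(b, R)\<leftarrow>rep. b * delta R y)"
    and integral: "c = (\<Sum>(b, R)\<leftarrow>rep. b * euler_char R)"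
    using assms(1) unfolding has_euler_integral_def by blast
  define rep' where "rep' = rep @ [(a, Q)]"
  have "\<forall>(b, R)\<in>set rep'. is_filter P R"
    using filters assms(2) by (simp add: rep'_def)
  moreover have "\<forall>y\<in>P. f y + a * delta Q y = (\<Sum>(b, R)\<leftarrow>rep'. b * delta R y)"
    using represents by (simp add: rep'_def)
  moreover have "c + a * euler_char Q = (\<Sum>(b, R)\<leftarrow>rep'. b * euler_char R)"
    using integral by (simp add: rep'_def)
  ultimately show ?thesis
    unfolding has_euler_integral_def by blast
qed

lemma has_euler_integral_change_at_chi_point:
  fixes P :: "'a::order set"
  assumes "finite P" and "x \<in> P"
    and chi_point: "euler_char {y \<in> P. x < y} = 1"
    and agree: "\<forall>y\<in>P. y \<noteq> x \<longrightarrow> h y = h' y"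
    and "has_euler_integral P h c"
  shows "has_euler_integral P h' c"
proof -
  define d where "d = h' x - h x"
  define A where "A = {y \<in> P. x \<le> y}"
  define B where "B = {y \<in> P. x < y}"
  have "euler_char A = 1"
    unfolding A_def using assms(1,2) by (intro euler_char_has_least[of _ x]) auto
  moreover have "euler_char B = 1"
    unfolding B_def by (rule chi_point)
  moreover have "has_euler_integral P (\<lambda>y. h y + d * delta A y + - d * delta B y)
      (c + d * euler_char A + - d * euler_char B)"
    using has_euler_integral_add_filter[OF has_euler_integral_add_filter[OF assms(5),
        of A d] _, of B "- d"]
    unfolding A_def B_def by (simp add: is_filter_atLeast is_filter_greaterThan)
  ultimately have shifted: "has_euler_integral P (\<lambda>y. h y + d * delta A y + - d * delta B y) c"
    by simp
  have "\<forall>y\<in>P. h y + d * delta A y + - d * delta B y = h' y"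
  proof
    fix y assume "y \<in> P"
    show "h y + d * delta A y + - d * delta B y = h' y"
    proof (cases "y = x")
      case True
      then show ?thesis
        using assms(2) by (simp add: d_def delta_def A_def B_def)
    next
      case False
      then have "delta A y = delta B y"
        by (auto simp: delta_def A_def B_def less_le)
      then show ?thesis
        using agree \<open>y \<in> P\<close> False by simp
    qed
  qed
  from has_euler_integral_cong[OF this] shifted show ?thesis
    by simp
qed

theorem proposition4p1:
  fixes P :: "'a::order set" and x :: 'a and h h' :: "'a \<Rightarrow> int"
  assumes "finite P"
    and "x \<in> P"
    and "euler_char {y \<in> P. x < y} = 1"
    and "\<forall>y\<in>P. y \<noteq> x \<longrightarrow> h y = h' y"
  shows "euler_integral P h = euler_integral P h'"
proof -
  have "\<forall>y\<in>P. y \<noteq> x \<longrightarrow> h' y = h y"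
    using assms(4) by auto
  then have "has_euler_integral P h = has_euler_integral P h'"
    using has_euler_integral_change_at_chi_point[OF assms(1-3)] assms(4)
    by (intro ext iffI)
  then show ?thesis
    by (simp add: euler_integral_eq_The)
qed

end
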